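(* Let $e\in\mathcal{PA}_n$ with $\mathrm{asc}(e)=k$. Then $e$ avoids the pattern $\underline{12}0$ if and only if its tail sequence $\mathbf{t}(e)$, which is an element of $\mathbf{I}_{k+1}$, is non-decreasing.
   Context: An inversion sequence of length $n$ is an integer sequence $e=e_1\ldots e_n$ with $0\leq e_i<i$; their set is $\mathbf{I}_n$. $\mathrm{asc}(e_1\ldots e_i)=|\{\ell\in[i-1]:e_\ell<e_{\ell+1}\}|$. An ascent sequence is an $e\in\mathbf{I}_n$ with $e_{i+1}\leq\mathrm{asc}(e_1\ldots e_i)+1$ for all $1\le i<n$. It is primitive if $e_i\neq e_{i+1}$ for all $i\in[n-1]$; $\mathcal{PA}_n$ denotes the set of primitive ascent sequences of length $n$. For a primitive ascent sequence $e$, partition $e$ uniquely into maximal strictly decreasing consecutive blocks called runs (e.g. $0102324325=0/10/2/32/432/5$); the tail sequence $\mathbf{t}(e)$ is the sequence of least (i.e. last) entries of the runs, in order (e.g. $002225$). A sequence $e$ avoids $\underline{12}0$ if there are no indices $2\leq i<j\leq n$ with $e_j<e_{i-1}<e_i$. *)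

theory Defs
  imports Main
begin

text \<open>Sequences are lists of naturals, 0-indexed: the paper's e_i is e ! (i-1).\<close>

definition inv_seqs :: "nat \<Rightarrow> nat list set" where
  "inv_seqs n = {e. length e = n \<and> (\<forall>i<n. e ! i < Suc i)}"

definition asc :: "nat list \<Rightarrow> nat" where
  "asc e = card {l. Suc l < length e \<and> e ! l < e ! Suc l}"

definition is_ascent_seq :: "nat list \<Rightarrow> bool" where
  "is_ascent_seq e \<longleftrightarrow> e \<in> inv_seqs (length e) \<and>
     (\<forall>i. 0 < i \<and> i < length e \<longrightarrow> e ! i \<le> asc (take i e) + 1)"

definition is_primitive :: "nat list \<Rightarrow> bool" where
  "is_primitive e \<longleftrightarrow> (\<forall>i. Suc i < length e \<longrightarrow> e ! i \<noteq> e ! Suc i)"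

definition prim_ascent_seqs :: "nat \<Rightarrow> nat list set" where
  "prim_ascent_seqs n = {e. length e = n \<and> is_ascent_seq e \<and> is_primitive e}"

fun runs :: "nat list \<Rightarrow> nat list list" where
  "runs [] = []"
| "runs [x] = [[x]]"
| "runs (x # y # xs) =
     (let r = runs (y # xs) in if y < x then (x # hd r) # tl r else [x] # r)"

definition tail_seq :: "nat list \<Rightarrow> nat list" where
  "tail_seq e = map last (runs e)"

text \<open>Avoidance of the vincular pattern 12-0 (first two letters adjacent):
  no 2 \<le> i < j \<le> n with e_j < e_{i-1} < e_i.  With a = i-2, b = j-1 (0-indexed).\<close>
definition avoids_12_0 :: "nat list \<Rightarrow> bool" where
  "avoids_12_0 e \<longleftrightarrow>
     \<not> (\<exists>a b. Suc a < b \<and> b < length e \<and> e ! b < e ! a \<and> e ! a < e ! Suc a)"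

end

theory Submission
  imports Defs
begin

text \<open>The runs of e end exactly at the non-descent positions p (those with e_p \<le> e_(p+1)) and at
  the last position; for primitive e these are the ascent positions and the last one, so there are
  asc e + 1 of them. The ascent condition bounds e_p by the number of ascents before p, hence the
  i-th tail entry by i. An occurrence e_b < e_a < e_(a+1) of the pattern makes a a run end, and
  following the run of b downwards reaches a later run end with an even smaller entry, so the tail
  sequence is not sorted. Conversely, a descent between consecutive run ends p < q is such an
  occurrence with a = p, b = q, where q \<noteq> p + 1 because e_p < e_(p+1) by primitivity.\<close>

definition is_run_end :: "nat list \<Rightarrow> nat \<Rightarrow> bool" where
  "is_run_end e p \<longleftrightarrow> Suc p = length e \<or> e ! p \<le> e ! Suc p"

definition run_ends :: "nat list \<Rightarrow> nat list" where
  "run_ends e = filter (is_run_end e) [0..<length e]"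

lemma runs_not_Nil: "xs \<noteq> [] \<Longrightarrow> runs xs \<noteq> []"
  by (induction xs rule: runs.induct) (auto simp: Let_def)

lemma Nil_notin_runs: "[] \<notin> set (runs xs)"
proof (induction xs rule: runs.induct)
  case (3 x y xs)
  then show ?case by (cases "runs (y # xs)") (auto simp: Let_def)
qed simp_all

lemma tail_seq_eq_map_run_ends: "tail_seq e = map ((!) e) (run_ends e)"
proof (induction e rule: runs.induct)
  case (3 x y xs)
  define r where "r = runs (y # xs)"
  have "r \<noteq> []" "hd r \<noteq> []"
    using runs_not_Nil[of "y # xs"] Nil_notin_runs[of "y # xs"] hd_in_set unfolding r_def
    by fastforce+
  then have tail_Cons: "tail_seq (x # y # xs) = (if y < x then [] else [x]) @ map last r"
    unfolding tail_seq_def by (cases r) (auto simp: Let_def r_def)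
  have "[0..<length (x # y # xs)] = 0 # map Suc [0..<length (y # xs)]"
    by (simp add: upt_conv_Cons map_Suc_upt del: upt_Suc)
  moreover have "is_run_end (x # y # xs) (Suc p) = is_run_end (y # xs) p" for p
    by (auto simp: is_run_end_def)
  moreover have "is_run_end (x # y # xs) 0 \<longleftrightarrow> \<not> y < x"
    by (auto simp: is_run_end_def)
  ultimately have "map ((!) (x # y # xs)) (run_ends (x # y # xs)) =
      (if y < x then [] else [x]) @ map ((!) (y # xs)) (run_ends (y # xs))"
    unfolding run_ends_def by (simp add: filter_map comp_def del: upt_Suc)
  with tail_Cons 3 show ?case by (simp add: tail_seq_def r_def)
qed (simp_all add: tail_seq_def run_ends_def is_run_end_def)

lemma set_run_ends: "set (run_ends e) = {p. p < length e \<and> is_run_end e p}"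
  by (auto simp: run_ends_def)

lemma sorted_wrt_run_ends: "sorted_wrt (<) (run_ends e)"
  unfolding run_ends_def by (rule sorted_wrt_filter) simp

lemma run_ends_nth_less_iff:
  "i < length (run_ends e) \<Longrightarrow> j < length (run_ends e) \<Longrightarrow>
    run_ends e ! i < run_ends e ! j \<longleftrightarrow> i < j"
  using sorted_wrt_run_ends sorted_wrt_nth_less by (metis linorder_neq_iff order_less_asym)

lemma in_run_endsE:
  assumes "p < length e" "is_run_end e p"
  obtains i where "i < length (run_ends e)" "run_ends e ! i = p"
  using assms by (metis in_set_conv_nth set_run_ends mem_Collect_eq)

lemma run_end_below:
  assumes "b < length e"
  shows "\<exists>q\<ge>b. q < length e \<and> is_run_end e q \<and> e ! q \<le> e ! b"
  using assms
proof (induction "length e - b" arbitrary: b rule: less_induct)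
  case less
  show ?case
  proof (cases "is_run_end e b")
    case False
    then have step: "Suc b < length e" "e ! Suc b < e ! b"
      using less.prems by (auto simp: is_run_end_def)
    then have "length e - Suc b < length e - b"
      by simp
    with less.hyps step(1) obtain q
      where "Suc b \<le> q" "q < length e" "is_run_end e q" "e ! q \<le> e ! Suc b"
      by blast
    with step show ?thesis by (auto intro!: exI[of _ q])
  qed (use less.prems in auto)
qed

lemma card_ascents_before_run_end:
  assumes "i < length (run_ends e)"
  shows "card {l. l < run_ends e ! i \<and> e ! l < e ! Suc l} \<le> i"
proof -
  have "{l. l < run_ends e ! i \<and> e ! l < e ! Suc l} \<subseteq> (!) (run_ends e) ` {..<i}"
  proof
    fix l assume l: "l \<in> {l. l < run_ends e ! i \<and> e ! l < e ! Suc l}"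
    have "run_ends e ! i < length e"
      using assms nth_mem set_run_ends by blast
    with l have "l < length e" "is_run_end e l"
      by (auto simp: is_run_end_def)
    then obtain j where j: "j < length (run_ends e)" "run_ends e ! j = l"
      by (rule in_run_endsE)
    with l have "j < i"
      using run_ends_nth_less_iff[OF j(1) assms] by simp
    with j show "l \<in> (!) (run_ends e) ` {..<i}" by blast
  qed
  then have "card {l. l < run_ends e ! i \<and> e ! l < e ! Suc l}
      \<le> card ((!) (run_ends e) ` {..<i})"
    by (rule card_mono[rotated]) simp
  also have "\<dots> \<le> i"
    using card_image_le[of "{..<i}" "(!) (run_ends e)"] by simp
  finally show ?thesis .
qed

lemma ascent_seq_nth_le_card_ascents:
  assumes "is_ascent_seq e" "j < length e"
  shows "e ! j \<le> card {l. l < j \<and> e ! l < e ! Suc l}"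
  using assms(2)
proof (induction j)
  case 0
  then show ?case using assms(1) by (auto simp: is_ascent_seq_def inv_seqs_def)
next
  case (Suc m)
  define A where "A m = {l. l < m \<and> e ! l < e ! Suc l}" for m
  have "asc (take (Suc m) e) = card (A m)"
    unfolding asc_def A_def using Suc.prems by (intro arg_cong[where f = card]) auto
  then have bound: "e ! Suc m \<le> card (A m) + 1"
    using assms(1) Suc.prems unfolding is_ascent_seq_def by auto
  show ?case
  proof (cases "e ! m < e ! Suc m")
    case True
    then have "A (Suc m) = insert m (A m)" by (auto simp: A_def)
    then have "card (A (Suc m)) = card (A m) + 1" by (simp add: A_def)
    then show ?thesis using bound unfolding A_def by simp
  next
    case False
    have "card (A m) \<le> card (A (Suc m))" by (rule card_mono) (auto simp: A_def)
    then show ?thesis using False Suc unfolding A_def by simp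
  qed
qed

lemma ascent_seq_run_end_bound:
  assumes "is_ascent_seq e" "i < length (run_ends e)"
  shows "e ! (run_ends e ! i) \<le> i"
  using ascent_seq_nth_le_card_ascents[OF assms(1)] card_ascents_before_run_end[OF assms(2)]
    assms(2) nth_mem set_run_ends le_trans by blast

lemma set_run_ends_primitive:
  assumes "is_primitive e" "e \<noteq> []"
  shows "set (run_ends e) = insert (length e - 1) {l. Suc l < length e \<and> e ! l < e ! Suc l}"
  using assms unfolding set_run_ends is_run_end_def is_primitive_def
  by (auto simp: le_less)

lemma length_run_ends_primitive:
  assumes "is_primitive e" "e \<noteq> []"
  shows "length (run_ends e) = asc e + 1"
proof -
  have "length (run_ends e) = card (set (run_ends e))"
    using sorted_wrt_run_ends by (metis distinct_card strict_sorted_iff)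
  also have "\<dots> = asc e + 1"
    unfolding set_run_ends_primitive[OF assms] asc_def
    by (subst card_insert_disjoint) (auto intro: finite_subset[of _ "{..<length e}"])
  finally show ?thesis .
qed

lemma tail_seq_in_inv_seqs:
  assumes "is_ascent_seq e" "is_primitive e" "e \<noteq> []"
  shows "tail_seq e \<in> inv_seqs (asc e + 1)"
  using ascent_seq_run_end_bound[OF assms(1)] length_run_ends_primitive[OF assms(2,3)]
  unfolding inv_seqs_def tail_seq_eq_map_run_ends by (simp add: less_Suc_eq_le)

lemma sorted_tail_seq_if_avoids_12_0:
  assumes "is_primitive e" "avoids_12_0 e"
  shows "sorted (tail_seq e)"
  unfolding tail_seq_eq_map_run_ends sorted_iff_nth_Suc
proof (intro allI impI, rule ccontr)
  fix i assume "Suc i < length (map ((!) e) (run_ends e))"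
    and "\<not> map ((!) e) (run_ends e) ! i \<le> map ((!) e) (run_ends e) ! Suc i"
  then have i: "Suc i < length (run_ends e)"
    and descent: "e ! (run_ends e ! Suc i) < e ! (run_ends e ! i)" by auto
  define p q where "p = run_ends e ! i" and "q = run_ends e ! Suc i"
  have "p < q" "q < length e" "is_run_end e p"
    using i run_ends_nth_less_iff[of i e "Suc i"] nth_mem[of i "run_ends e"] nth_mem[OF i]
    unfolding p_def q_def set_run_ends by auto
  then have "Suc p < length e" "e ! p \<le> e ! Suc p"
    unfolding is_run_end_def by auto
  then have "e ! p < e ! Suc p"
    using assms(1) unfolding is_primitive_def by (simp add: order.not_eq_order_implies_strict)
  with descent \<open>p < q\<close> have "Suc p < q" unfolding p_def q_def by (metis Suc_lessI order.asym)
  with descent \<open>e ! p < e ! Suc p\<close> \<open>q < length e\<close> assms(2) show False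
    unfolding avoids_12_0_def p_def q_def by blast
qed

lemma avoids_12_0_if_sorted_tail_seq:
  assumes "sorted (tail_seq e)"
  shows "avoids_12_0 e"
  unfolding avoids_12_0_def
proof
  assume "\<exists>a b. Suc a < b \<and> b < length e \<and> e ! b < e ! a \<and> e ! a < e ! Suc a"
  then obtain a b where ab: "Suc a < b" "b < length e" "e ! b < e ! a" "e ! a < e ! Suc a"
    by blast
  then have "a < length e" "is_run_end e a"
    by (auto simp: is_run_end_def)
  then obtain i where i: "i < length (run_ends e)" "run_ends e ! i = a"
    by (rule in_run_endsE)
  obtain q where q: "b \<le> q" "q < length e" "is_run_end e q" "e ! q \<le> e ! b"
    using run_end_below[OF ab(2)] by blast
  obtain j where j: "j < length (run_ends e)" "run_ends e ! j = q"
    using q(2,3) by (rule in_run_endsE)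
  have "i < j" using run_ends_nth_less_iff[OF i(1) j(1)] i j ab q by simp
  then have "e ! a \<le> e ! q" using assms i j
    unfolding tail_seq_eq_map_run_ends sorted_iff_nth_mono_less by fastforce
  with q ab show False by simp
qed

theorem lemma2p1:
  fixes e :: "nat list" and n k :: nat
  assumes "n \<ge> 1"
    and "e \<in> prim_ascent_seqs n"
    and "asc e = k"
  shows "tail_seq e \<in> inv_seqs (k + 1) \<and> (avoids_12_0 e \<longleftrightarrow> sorted (tail_seq e))"
proof -
  have "is_ascent_seq e" "is_primitive e" "e \<noteq> []"
    using assms(1,2) by (auto simp: prim_ascent_seqs_def)
  then show ?thesis
    using tail_seq_in_inv_seqs sorted_tail_seq_if_avoids_12_0 avoids_12_0_if_sorted_tail_seq
      assms(3) by blast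
qed

end
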